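(* If $f\in C^2(\mathbb T,\mathbb R)$ is non-degenerate, then $$\mathcal H^0(\{f=0\})=\frac1\pi\int_0^{2\pi}\frac{f'(x)^2-f(x)f''(x)}{f(x)^2+f'(x)^2}\,dx .$$
   Context: $\mathbb T=\mathbb R/2\pi\mathbb Z$, functions on $\mathbb T$ are identified with $2\pi$-periodic functions on $\mathbb R$, and $\mathcal H^0(\{f=0\})$ is the number of zeros of $f$ in one period $[0,2\pi)$. $f$ is non-degenerate if $\min_x\sqrt{f(x)^2+f'(x)^2}>0$. *)

theory Defs
  imports "HOL-Analysis.Analysis"
begin

end

theory Submission
  imports Defs
begin

(*
  Away from the zeros of f, the function -arctan (f'/f) is a primitive of the integrand.
  At a zero t, which is simple by non-degeneracy, f f' has the sign of s - t nearby, so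
  -arctan (f'/f) drops from pi/2 to -pi/2 as s passes t. Adding pi times the number of zeros
  in [0, s) therefore yields a primitive on all of [0, \<infinity>), and by periodicity its increment
  over [0, 2 pi] is pi times the number of zeros.
*)

lemma has_real_derivative_arctan_divide:
  fixes u v :: "real \<Rightarrow> real"
  assumes "(u has_real_derivative u') (at t within S)" and "(v has_real_derivative v') (at t within S)"
    and "v t \<noteq> 0"
  shows "((\<lambda>s. arctan (u s / v s)) has_real_derivative
           (u' * v t - u t * v') / ((u t)\<^sup>2 + (v t)\<^sup>2)) (at t within S)"
proof -
  have "((\<lambda>s. arctan (u s / v s)) has_real_derivative
          inverse (1 + (u t / v t)\<^sup>2) * ((u' * v t - u t * v') / (v t * v t))) (at t within S)"
    by (intro DERIV_chain2[OF DERIV_arctan] DERIV_divide assms)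
  also have "inverse (1 + (u t / v t)\<^sup>2) * ((u' * v t - u t * v') / (v t * v t))
             = (u' * v t - u t * v') / ((u t)\<^sup>2 + (v t)\<^sup>2)"
  proof -
    have "(u t)\<^sup>2 + (v t)\<^sup>2 > 0"
      using assms(3) by (simp add: add_nonneg_pos)
    then have "inverse (1 + (u t / v t)\<^sup>2) = (v t)\<^sup>2 / ((u t)\<^sup>2 + (v t)\<^sup>2)"
      using assms(3) by (simp add: field_simps)
    then show ?thesis
      using assms(3) by (simp add: power2_eq_square)
  qed
  finally show ?thesis .
qed

lemma arctan_divide_swap:
  fixes a b :: real
  assumes "a \<noteq> 0" and "b \<noteq> 0"
  shows "arctan (b / a) = sgn (a * b) * pi / 2 - arctan (a / b)"
  using Transcendental.arctan_inverse[of "a / b"] assms by (simp add: sgn_mult sgn_divide)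

lemma simple_zero_sign:
  fixes f f' :: "real \<Rightarrow> real"
  assumes "(f has_real_derivative f' z) (at z)" and "isCont f' z"
    and "f z = 0" and "f' z \<noteq> 0"
  shows "eventually (\<lambda>s. sgn (f s * f' s) = sgn (s - z)) (at z)"
proof -
  have "((\<lambda>s. f s / (s - z) * f' z) \<longlongrightarrow> f' z * f' z) (at z)"
    using assms(1,3) by (intro tendsto_intros) (simp add: has_field_derivative_iff)
  then have "eventually (\<lambda>s. f s / (s - z) * f' z > 0) (at z)"
    using assms(4) order_tendstoD(1) not_real_square_gt_zero by blast
  moreover have "((\<lambda>s. f' s * f' z) \<longlongrightarrow> f' z * f' z) (at z)"
    using assms(2) by (intro tendsto_intros) (simp add: isCont_def)
  then have "eventually (\<lambda>s. f' s * f' z > 0) (at z)"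
    using assms(4) order_tendstoD(1) not_real_square_gt_zero by blast
  moreover have "eventually (\<lambda>s. s \<noteq> z) (at z)"
    by (simp add: eventually_at_filter)
  ultimately show ?thesis
  proof eventually_elim
    case (elim s)
    then have "f s / (s - z) * f' s * (f' z)\<^sup>2 > 0"
      by (metis mult_pos_pos mult.commute mult.left_commute power2_eq_square)
    then have "f s / (s - z) * f' s > 0"
      using assms(4) zero_less_mult_pos2 by (metis zero_less_power2)
    then show ?case
      using elim(3) by (auto simp: sgn_if zero_less_mult_iff zero_less_divide_iff mult_less_0_iff)
  qed
qed

lemma finite_zeros_if_isolated:
  fixes f :: "real \<Rightarrow> real"
  assumes cont: "continuous_on {a..b} f"
    and isolated: "\<And>z. z \<in> {a..b} \<Longrightarrow> f z = 0 \<Longrightarrow> eventually (\<lambda>s. f s \<noteq> 0) (at z)"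
  shows "finite {x \<in> {a..b}. f x = 0}"
proof (rule ccontr)
  let ?Z = "{x \<in> {a..b}. f x = 0}"
  assume "infinite ?Z"
  then obtain z where z: "z \<in> {a..b}" "z islimpt ?Z"
    using Heine_Borel_imp_Bolzano_Weierstrass[OF compact_Icc] by blast
  have "closed ?Z"
    using continuous_closed_preimage_constant[OF cont closed_atLeastAtMost] .
  then have "f z = 0"
    using z closed_limpt by blast
  have "eventually (\<lambda>s. s \<notin> ?Z) (at z)"
    using isolated[OF z(1) \<open>f z = 0\<close>] by (rule eventually_mono) simp
  then show False
    using z(2) by (simp add: islimpt_iff_eventually)
qed

lemma finite_simple_zeros:
  fixes f f' :: "real \<Rightarrow> real"
  assumes "\<And>x. (f has_real_derivative f' x) (at x)" and "\<And>x. isCont f' x"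
    and "\<And>x. f x = 0 \<Longrightarrow> f' x \<noteq> 0"
  shows "finite {x \<in> {a..b}. f x = 0}"
proof (rule finite_zeros_if_isolated)
  show "continuous_on {a..b} f"
    using assms(1) by (meson DERIV_isCont continuous_at_imp_continuous_on)
  fix z assume "f z = 0"
  with assms have "eventually (\<lambda>s. sgn (f s * f' s) = sgn (s - z)) (at z)"
    by (intro simple_zero_sign) auto
  moreover have "eventually (\<lambda>s. s \<noteq> z) (at z)"
    by (simp add: eventually_at_filter)
  ultimately show "eventually (\<lambda>s. f s \<noteq> 0) (at z)"
    by eventually_elim (auto simp: sgn_0_0)
qed

definition zero_count :: "(real \<Rightarrow> real) \<Rightarrow> real \<Rightarrow> nat" where
  "zero_count f s = card {x \<in> {0..<s}. f x = 0}"

lemma zero_count_eq_if_no_zeros: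
  assumes "s \<le> t" and "\<And>x. s \<le> x \<Longrightarrow> x < t \<Longrightarrow> f x \<noteq> 0"
  shows "zero_count f s = zero_count f t"
proof -
  have "{x \<in> {0..<s}. f x = 0} = {x \<in> {0..<t}. f x = 0}"
    using assms by (force simp: not_le)
  then show ?thesis
    by (simp add: zero_count_def)
qed

lemma zero_count_Suc_past_zero:
  assumes "0 \<le> t" and "t < s" and "f t = 0" and "\<And>x. t < x \<Longrightarrow> x < s \<Longrightarrow> f x \<noteq> 0"
    and "finite {x \<in> {0..<t}. f x = 0}"
  shows "zero_count f s = Suc (zero_count f t)"
proof -
  have "x < t \<or> x = t" if "x < s" and "f x = 0" for x
    using assms(4)[of x] that by force
  then have "{x \<in> {0..<s}. f x = 0} = insert t {x \<in> {0..<t}. f x = 0}"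
    using assms(1-3) by auto
  then show ?thesis
    using assms(5) by (simp add: zero_count_def)
qed

definition winding_angle :: "(real \<Rightarrow> real) \<Rightarrow> (real \<Rightarrow> real) \<Rightarrow> real \<Rightarrow> real" where
  "winding_angle f f' s =
     pi * zero_count f s + (if f s = 0 then pi / 2 else - arctan (f' s / f s))"

lemma winding_angle_near_nonzero:
  assumes "isCont f t" and "f t \<noteq> 0"
  shows "eventually (\<lambda>s. winding_angle f f' s = pi * zero_count f t - arctan (f' s / f s)) (nhds t)"
proof -
  obtain d where "d > 0" and d: "\<And>y. dist y t < d \<Longrightarrow> f y \<noteq> 0"
    using continuous_at_avoid[OF assms] by (metis dist_commute)
  have count: "zero_count f s = zero_count f t" if "dist s t < d" for s
  proof (cases "s \<le> t")
    case True
    then show ?thesis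
      using d that by (intro zero_count_eq_if_no_zeros) (auto simp: dist_real_def)
  next
    case False
    then show ?thesis
      using d that by (intro zero_count_eq_if_no_zeros[symmetric]) (auto simp: dist_real_def)
  qed
  show ?thesis
    unfolding eventually_nhds_metric
  proof (intro exI[of _ d] conjI allI impI)
    fix s
    assume "dist s t < d"
    then show "winding_angle f f' s = pi * zero_count f t - arctan (f' s / f s)"
      using d count by (simp add: winding_angle_def)
  qed (rule \<open>d > 0\<close>)
qed

lemma winding_angle_near_simple_zero:
  assumes "(f has_real_derivative f' t) (at t)" and "isCont f' t"
    and "f t = 0" and "f' t \<noteq> 0" and "0 \<le> t" and "finite {x \<in> {0..<t}. f x = 0}"
  shows "eventually (\<lambda>s. winding_angle f f' s
                        = pi * zero_count f t + pi / 2 + arctan (f s / f' s)) (nhds t)"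
proof -
  obtain d where "d > 0"
    and sign: "\<And>s. s \<noteq> t \<Longrightarrow> dist s t < d \<Longrightarrow> sgn (f s * f' s) = sgn (s - t)"
    using simple_zero_sign[OF assms(1-4)] unfolding eventually_at by blast
  have nonzero: "f s \<noteq> 0" "f' s \<noteq> 0" if "s \<noteq> t" "dist s t < d" for s
    using sign[OF that] that(1) by (auto simp: sgn_0_0)
  have "winding_angle f f' s = pi * zero_count f t + pi / 2 + arctan (f s / f' s)"
    if "dist s t < d" for s
  proof -
    consider "s = t" | "s < t" | "t < s"
      by linarith
    then show ?thesis
    proof cases
      case 1
      then show ?thesis
        using assms(3) by (simp add: winding_angle_def)
    next
      case 2
      have "zero_count f s = zero_count f t"
        using nonzero that 2 by (intro zero_count_eq_if_no_zeros) (auto simp: dist_real_def)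
      moreover have "sgn (f s * f' s) = -1"
        using sign[of s] that 2 by simp
      ultimately show ?thesis
        using arctan_divide_swap[of "f s" "f' s"] nonzero[of s] that 2
        by (simp add: winding_angle_def)
    next
      case 3
      have "zero_count f s = Suc (zero_count f t)"
        using nonzero that 3 assms(3,5,6)
        by (intro zero_count_Suc_past_zero) (auto simp: dist_real_def)
      moreover have "sgn (f s * f' s) = 1"
        using sign[of s] that 3 by simp
      ultimately show ?thesis
        using arctan_divide_swap[of "f s" "f' s"] nonzero[of s] that 3
        by (simp add: winding_angle_def algebra_simps)
    qed
  qed
  then show ?thesis
    unfolding eventually_nhds_metric using \<open>d > 0\<close> by blast
qed

lemma winding_angle_has_real_derivative:
  assumes d1: "(f has_real_derivative f' t) (at t)" and d2: "(f' has_real_derivative f'' t) (at t)"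
    and simple: "f t = 0 \<Longrightarrow> f' t \<noteq> 0" and "0 \<le> t" and "finite {x \<in> {0..<t}. f x = 0}"
  shows "(winding_angle f f' has_real_derivative
            ((f' t)\<^sup>2 - f t * f'' t) / ((f t)\<^sup>2 + (f' t)\<^sup>2)) (at t)"
proof (cases "f t = 0")
  case False
  have "((\<lambda>s. pi * zero_count f t - arctan (f' s / f s)) has_real_derivative
          0 - (f'' t * f t - f' t * f' t) / ((f' t)\<^sup>2 + (f t)\<^sup>2)) (at t)"
    by (intro derivative_intros has_real_derivative_arctan_divide d1 d2 False)
  then show ?thesis
    using winding_angle_near_nonzero[OF DERIV_isCont[OF d1] False]
    by (subst DERIV_cong_ev[OF refl]) (auto simp: add.commute power2_eq_square diff_divide_distrib)
next
  case True
  have "((\<lambda>s. pi * zero_count f t + pi / 2 + arctan (f s / f' s)) has_real_derivative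
          0 + (f' t * f' t - f t * f'' t) / ((f t)\<^sup>2 + (f' t)\<^sup>2)) (at t)"
    using simple True by (intro derivative_intros has_real_derivative_arctan_divide d1 d2) auto
  then show ?thesis
    using winding_angle_near_simple_zero[OF d1 DERIV_isCont[OF d2] True simple[OF True] assms(4,5)]
    by (subst DERIV_cong_ev[OF refl]) (auto simp: power2_eq_square)
qed

lemma has_real_derivative_periodic:
  assumes "\<And>x. f (x + p) = f x" and "\<And>x. (f has_real_derivative f' x) (at x)"
  shows "f' (x + p) = f' x"
proof -
  have "((\<lambda>y. f (y + p)) has_real_derivative f' (x + p) * 1) (at x)"
    by (rule DERIV_chain2[OF assms(2)]) (auto intro!: derivative_eq_intros)
  then have "(f has_real_derivative f' (x + p)) (at x)"
    using assms(1) by simp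
  then show ?thesis
    using assms(2) DERIV_unique by blast
qed

lemma nondegenerate_imp_simple_zero:
  fixes f f' :: "real \<Rightarrow> real"
  assumes "(INF x. sqrt ((f x)\<^sup>2 + (f' x)\<^sup>2)) > 0" and "f x = 0"
  shows "f' x \<noteq> 0"
proof
  assume "f' x = 0"
  have "bdd_below (range (\<lambda>x. sqrt ((f x)\<^sup>2 + (f' x)\<^sup>2)))"
    by (rule bdd_belowI[of _ 0]) auto
  then have "(INF x. sqrt ((f x)\<^sup>2 + (f' x)\<^sup>2)) \<le> sqrt ((f x)\<^sup>2 + (f' x)\<^sup>2)"
    by (rule cINF_lower) simp
  with assms \<open>f' x = 0\<close> show False
    by simp
qed

theorem corollary1:
  fixes f f' f'' :: "real \<Rightarrow> real"
  assumes periodic: "\<And>x. f (x + 2 * pi) = f x"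
    and d1: "\<And>x. (f has_real_derivative f' x) (at x)"
    and d2: "\<And>x. (f' has_real_derivative f'' x) (at x)"
    and cont2: "continuous_on UNIV f''"
    and nondeg: "(INF x. sqrt ((f x)\<^sup>2 + (f' x)\<^sup>2)) > 0"
  shows "real (card {x \<in> {0..<2 * pi}. f x = 0})
           = (1 / pi) * integral {0..2 * pi}
               (\<lambda>x. ((f' x)\<^sup>2 - f x * f'' x) / ((f x)\<^sup>2 + (f' x)\<^sup>2))"
proof -
  let ?g = "\<lambda>x. ((f' x)\<^sup>2 - f x * f'' x) / ((f x)\<^sup>2 + (f' x)\<^sup>2)"
  have simple: "\<And>x. f x = 0 \<Longrightarrow> f' x \<noteq> 0"
    using nondegenerate_imp_simple_zero[OF nondeg] by blast
  have finite: "finite {x \<in> {0..<t}. f x = 0}" for t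
    using finite_simple_zeros[OF d1 DERIV_isCont[OF d2] simple, of 0 t] by (rule rev_finite_subset) auto
  have "(winding_angle f f' has_real_derivative ?g x) (at x)" if "0 \<le> x" for x
    using simple that finite by (intro winding_angle_has_real_derivative d1 d2)
  then have "(?g has_integral winding_angle f f' (2 * pi) - winding_angle f f' 0) {0..2 * pi}"
    by (intro fundamental_theorem_of_calculus)
       (auto simp: has_real_derivative_iff_has_vector_derivative has_vector_derivative_at_within)
  moreover have "f' (2 * pi) = f' 0"
    using has_real_derivative_periodic[OF periodic d1, of 0] by simp
  then have "winding_angle f f' (2 * pi) - winding_angle f f' 0 = pi * card {x \<in> {0..<2 * pi}. f x = 0}"
    using periodic[of 0] by (simp add: winding_angle_def zero_count_def)
  ultimately show ?thesis
    by (simp add: integral_unique)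
qed

end
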